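(* $\kappa_4(S_4^2)\geqslant 10$ and $\kappa_5(S_4^2)\geqslant 12$.
   Context: For an integer $\ell\geqslant 2$, $\kappa_\ell(G)$ is the minimum number of vertices whose removal from $G$ results in a disconnected graph with at least $\ell$ components or a graph with fewer than $\ell$ vertices. $S_4^2$ is the split-star: vertex set all permutations $p=p_1p_2p_3p_4$ of $\{1,2,3,4\}$, with $p$ adjacent to $p\mathrm{g}_{12}$ (swap symbols at positions 1 and 2) and to $p\mathrm{g}_i^+$, $p\mathrm{g}_i^-$ for $i\in\{3,4\}$, where $p\mathrm{g}_i^+$ places $p_i,p_1,p_2$ at positions $1,2,i$ and $p\mathrm{g}_i^-$ places $p_2,p_i,p_1$ at positions $1,2,i$ (other positions unchanged). *)

theory Defs
  imports Main
begin

text \<open>A graph is given by a vertex set V and a (symmetric) adjacency relation E.\<close>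

definition induced_edges :: "'a set \<Rightarrow> ('a \<Rightarrow> 'a \<Rightarrow> bool) \<Rightarrow> ('a \<times> 'a) set" where
  "induced_edges S E = {(x, y). x \<in> S \<and> y \<in> S \<and> E x y}"

definition components :: "'a set \<Rightarrow> ('a \<Rightarrow> 'a \<Rightarrow> bool) \<Rightarrow> 'a set set" where
  "components S E = (\<lambda>v. {w \<in> S. (v, w) \<in> (induced_edges S E)\<^sup>*}) ` S"

definition gen_conn :: "nat \<Rightarrow> 'a set \<Rightarrow> ('a \<Rightarrow> 'a \<Rightarrow> bool) \<Rightarrow> nat" where
  "gen_conn l V E = Inf {card F | F. F \<subseteq> V \<and>
      ((card (components (V - F) E) \<ge> 2 \<and> card (components (V - F) E) \<ge> l)
       \<or> card (V - F) < l)}"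

text \<open>Permutations p = p1 p2 p3 p4 are lists of length 4; position k (1-based) is index k-1.\<close>

definition S42_V :: "nat list set" where
  "S42_V = {p. length p = 4 \<and> distinct p \<and> set p = {1, 2, 3, 4}}"

definition g12 :: "nat list \<Rightarrow> nat list" where
  "g12 p = p[0 := p ! 1, 1 := p ! 0]"

definition gplus :: "nat \<Rightarrow> nat list \<Rightarrow> nat list" where
  "gplus i p = p[0 := p ! (i - 1), 1 := p ! 0, i - 1 := p ! 1]"

definition gminus :: "nat \<Rightarrow> nat list \<Rightarrow> nat list" where
  "gminus i p = p[0 := p ! 1, 1 := p ! (i - 1), i - 1 := p ! 0]"

definition S42_E :: "nat list \<Rightarrow> nat list \<Rightarrow> bool" where
  "S42_E p q \<longleftrightarrow> q = g12 p \<or> (\<exists>i \<in> {3, 4}. q = gplus i p \<or> q = gminus i p)"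

end

theory Submission
  imports Defs
begin

text \<open>
  The generators of S_4^2 act on positions, so relabelling the symbols of every permutation by one
  bijection of {1, 2, 3, 4} is an automorphism, and it can move any vertex to 1234. Hence, if deleting
  F leaves at least k components, we may assume that 1234 lies in a smallest one. What remains is a
  finite but pruned search: the components are grown one after the other, smallest first, by
  breadth-first search from a seed, each boundary vertex being either cut (put into F) or added to
  the component; k components of size at least |C| together with F need k |C| + |F| vertices, which
  bounds the search. For k = 4, |F| <= 9 and for k = 5, |F| <= 11 it finds nothing.
\<close>

section \<open>Components and generalized connectivity\<close>

lemma components_subset: "C \<in> components X E \<Longrightarrow> C \<subseteq> X"
  by (auto simp: components_def)

lemma components_nonempty: "C \<in> components X E \<Longrightarrow> C \<noteq> {}"
  by (auto simp: components_def)

lemma component_eq_reachable: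
  assumes sym: "symp_on X E" and C: "C \<in> components X E" and x: "x \<in> C"
  shows "C = {w \<in> X. (x, w) \<in> (induced_edges X E)\<^sup>*}"
proof -
  have "sym (induced_edges X E)"
    using sym by (auto simp: sym_def symp_on_def induced_edges_def)
  then have "sym ((induced_edges X E)\<^sup>*)"
    by (rule sym_rtrancl)
  then have reach_sym: "(u, w) \<in> (induced_edges X E)\<^sup>* \<Longrightarrow> (w, u) \<in> (induced_edges X E)\<^sup>*" for u w
    by (rule symD)
  obtain v where "C = {w \<in> X. (v, w) \<in> (induced_edges X E)\<^sup>*}"
    using C by (auto simp: components_def)
  with x reach_sym show ?thesis
    by (auto intro: rtrancl_trans)
qed

lemma component_closed:
  assumes "symp_on X E" "C \<in> components X E" "u \<in> C" "v \<in> X" "E u v"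
  shows "v \<in> C"
proof -
  have "(u, v) \<in> induced_edges X E"
    using assms components_subset by (auto simp: induced_edges_def)
  then show ?thesis
    using component_eq_reachable[OF assms(1-3)] assms(4) by auto
qed

lemma components_disjoint:
  assumes "symp_on X E" "C \<in> components X E" "D \<in> components X E" "x \<in> C" "x \<in> D"
  shows "C = D"
  using component_eq_reachable[OF assms(1,2,4)] component_eq_reachable[OF assms(1,3,5)] by simp

lemma component_eqI:
  assumes sym: "symp_on X E" and C: "C \<in> components X E" and "x \<in> S" "S \<subseteq> C"
    and closed: "\<And>u v. u \<in> S \<Longrightarrow> v \<in> X \<Longrightarrow> E u v \<Longrightarrow> v \<in> S"
  shows "C = S"
proof -
  have "w \<in> S" if "(x, w) \<in> (induced_edges X E)\<^sup>*" for w
    using that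
  proof (induction rule: rtrancl_induct)
    case base
    show ?case using \<open>x \<in> S\<close> .
  next
    case (step y z)
    then show ?case using closed by (auto simp: induced_edges_def)
  qed
  then show ?thesis
    using component_eq_reachable[OF sym C] assms(3,4) by auto
qed

lemma component_Diff_component:
  assumes sym: "symp_on X E" and C: "C \<in> components X E" and D: "D \<in> components X E" "D \<noteq> C"
  shows "D \<in> components (X - C) E"
proof -
  obtain d where d: "d \<in> D"
    using components_nonempty[OF D(1)] by auto
  have "d \<notin> C"
    using components_disjoint[OF sym C D(1)] d D(2) by auto
  have reach_avoids_C: "w \<notin> C \<and> (d, w) \<in> (induced_edges (X - C) E)\<^sup>*"
    if "(d, w) \<in> (induced_edges X E)\<^sup>*" for w
    using that
  proof (induction rule: rtrancl_induct)
    case base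
    show ?case using \<open>d \<notin> C\<close> by simp
  next
    case (step y z)
    then have yz: "y \<in> X" "z \<in> X" "E y z"
      by (auto simp: induced_edges_def)
    have "z \<notin> C"
      using step.IH component_closed[OF sym C _ yz(1)] sym yz by (auto simp: symp_on_def)
    then have "(y, z) \<in> induced_edges (X - C) E"
      using step.IH yz by (auto simp: induced_edges_def)
    with step.IH \<open>z \<notin> C\<close> show ?case
      by (auto intro: rtrancl_into_rtrancl)
  qed
  have "induced_edges (X - C) E \<subseteq> induced_edges X E"
    by (auto simp: induced_edges_def)
  then have "(d, w) \<in> (induced_edges (X - C) E)\<^sup>* \<Longrightarrow> (d, w) \<in> (induced_edges X E)\<^sup>*" for w
    using rtrancl_mono by blast
  with reach_avoids_C component_eq_reachable[OF sym D(1) d]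
  have "D = {w \<in> X - C. (d, w) \<in> (induced_edges (X - C) E)\<^sup>*}"
    by blast
  moreover have "d \<in> X - C"
    using components_subset[OF D(1)] d \<open>d \<notin> C\<close> by auto
  ultimately show ?thesis
    unfolding components_def by blast
qed

lemma card_components_mult_le:
  assumes fin: "finite X" and sym: "symp_on X E" and cs: "cs \<subseteq> components X E"
    and large: "\<And>D. D \<in> cs \<Longrightarrow> m \<le> card D"
  shows "card cs * m \<le> card X"
proof -
  have "pairwise disjnt cs"
  proof (rule pairwiseI)
    fix C D
    assume "C \<in> cs" "D \<in> cs" "C \<noteq> D"
    then show "disjnt C D"
      using components_disjoint[OF sym] cs unfolding disjnt_def by blast
  qed
  moreover have "finite D" if "D \<in> cs" for D
    using finite_subset[OF components_subset fin] cs that by blast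
  ultimately have "sum card cs = card (\<Union>cs)"
    by (simp add: card_Union_disjoint)
  also have "\<dots> \<le> card X"
    using cs components_subset by (intro card_mono[OF fin]) blast
  finally have "sum card cs \<le> card X" .
  moreover have "card cs * m \<le> sum card cs"
    using sum_bounded_below[of cs m card] large by simp
  ultimately show ?thesis
    by linarith
qed

lemma components_image:
  assumes inj: "inj_on h X" and hom: "\<And>u v. u \<in> X \<Longrightarrow> v \<in> X \<Longrightarrow> E (h u) (h v) \<longleftrightarrow> A u v"
  shows "components (h ` X) E = image h ` components X A"
proof -
  have fwd: "(h u, h w) \<in> (induced_edges (h ` X) E)\<^sup>*" if "(u, w) \<in> (induced_edges X A)\<^sup>*" for u w
    using that
  proof (induction rule: rtrancl_induct)
    case base
    show ?case by simp
  next
    case (step y z)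
    then have "(h y, h z) \<in> induced_edges (h ` X) E"
      using hom by (auto simp: induced_edges_def)
    with step.IH show ?case
      by (rule rtrancl_into_rtrancl)
  qed
  have bwd: "\<exists>w'. w' \<in> X \<and> w = h w' \<and> (u, w') \<in> (induced_edges X A)\<^sup>*"
    if "(h u, w) \<in> (induced_edges (h ` X) E)\<^sup>*" "u \<in> X" for u w
    using that
  proof (induction rule: rtrancl_induct)
    case base
    then show ?case by blast
  next
    case (step y z)
    then obtain y' where y': "y' \<in> X" "y = h y'" "(u, y') \<in> (induced_edges X A)\<^sup>*"
      by blast
    from step.hyps(2) obtain z' where z': "z' \<in> X" "z = h z'" "E (h y') (h z')"
      using y' by (auto simp: induced_edges_def)
    then have "(y', z') \<in> induced_edges X A"
      using hom y'(1) by (auto simp: induced_edges_def)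
    with y' z' show ?case
      by (blast intro: rtrancl_into_rtrancl)
  qed
  have component_image: "{w \<in> h ` X. (h v, w) \<in> (induced_edges (h ` X) E)\<^sup>*}
      = h ` {w \<in> X. (v, w) \<in> (induced_edges X A)\<^sup>*}" if "v \<in> X" for v
    using fwd bwd[OF _ that] by blast
  have "components (h ` X) E = (\<lambda>v. {w \<in> h ` X. (h v, w) \<in> (induced_edges (h ` X) E)\<^sup>*}) ` X"
    unfolding components_def image_image ..
  also have "\<dots> = image h ` components X A"
    unfolding components_def image_image using component_image by (rule image_cong[OF refl])
  finally show ?thesis .
qed

lemma card_components_image:
  assumes "inj_on h X" and "\<And>u v. u \<in> X \<Longrightarrow> v \<in> X \<Longrightarrow> E (h u) (h v) \<longleftrightarrow> A u v"
  shows "card (components (h ` X) E) = card (components X A)"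
proof -
  have "inj_on (image h) (components X A)"
    by (rule inj_onI) (meson assms(1) components_subset inj_on_image_eq_iff)
  then show ?thesis
    using components_image[of h X E A] assms by (simp add: card_image)
qed

lemma gen_conn_lower_bound:
  assumes fin: "finite V" and "0 < l" and size: "m + l \<le> Suc (card V)"
    and few: "\<And>F. F \<subseteq> V \<Longrightarrow> card F < m \<Longrightarrow> card (components (V - F) E) < l"
  shows "m \<le> gen_conn l V E"
proof -
  have large: "m \<le> card F"
    if F: "F \<subseteq> V" and sep: "(2 \<le> card (components (V - F) E) \<and> l \<le> card (components (V - F) E))
      \<or> card (V - F) < l" for F
  proof (rule ccontr)
    assume small: "\<not> m \<le> card F"
    then have "card (components (V - F) E) < l"
      using few F by simp
    moreover have "card (V - F) = card V - card F" "card F \<le> card V"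
      using F fin by (auto simp: card_Diff_subset finite_subset card_mono)
    ultimately show False
      using sep small size by linarith
  qed
  have "card (V - V) < l"
    using \<open>0 < l\<close> by simp
  then show ?thesis
    unfolding gen_conn_def using large by (intro cInf_greatest) blast+
qed

section \<open>A verified search for separating sets\<close>

text \<open>
  The graph has vertices 0, ..., N - 1 and adjacency lists nbr; a search state assigns a status
  to every vertex. Seed \<sigma> k b s w v looks among the vertices v, v + 1, ... for a vertex of the
  next, smallest remaining, component; Grow \<sigma> Q k b r z s grows that component from its z Grown
  vertices by deciding the boundary vertices queued in Q. In both, k components of size at least s
  are still wanted, at most b more vertices may be cut, w is the number of live (not Gone)
  vertices and the slack r is w - k z - (number of Cut vertices). Skipped vertices are known to lie
  outside the current component. The answer True is always sound; False certifies that
  no configuration exists (search_sound).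
\<close>

datatype status = Gone | Cut | Grown | Free | Skipped

fun level_reset :: "status \<Rightarrow> status" where
  "level_reset Free = Free"
| "level_reset Skipped = Free"
| "level_reset Gone = Gone"
| "level_reset Cut = Gone"
| "level_reset Grown = Gone"

datatype task =
    Seed "status list" nat nat nat nat nat
  | Grow "status list" "nat list" nat nat nat nat nat

primrec search :: "nat \<Rightarrow> (nat \<Rightarrow> nat list) \<Rightarrow> nat \<Rightarrow> task \<Rightarrow> bool" where
  "search N nbr 0 t = True"
| "search N nbr (Suc n) t =
    (case t of
      Seed \<sigma> k b s w v \<Rightarrow>
        (if N \<le> v then False
         else if \<sigma> ! v = Free then
           (if k \<le> w then
              (if search N nbr n (Grow (\<sigma>[v := Grown]) (nbr v) k b (w - k) 1 s) then True
               else search N nbr n (Seed (\<sigma>[v := Skipped]) k b s w (Suc v)))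
            else False)
         else search N nbr n (Seed \<sigma> k b s w (Suc v)))
    | Grow \<sigma> Q k b r z s \<Rightarrow>
        (case Q of
          [] \<Rightarrow>
            (if z < s then False
             else if k \<le> 2 then True
             else search N nbr n (Seed (map level_reset \<sigma>) (k - 1) b z (r + (k - 1) * z) 0))
        | y # Q' \<Rightarrow>
            (if \<sigma> ! y = Free then
               (if (if 0 < b \<and> 0 < r then search N nbr n (Grow (\<sigma>[y := Cut]) Q' k (b - 1) (r - 1) z s)
                    else False) then True
                else if k \<le> r then search N nbr n (Grow (\<sigma>[y := Grown]) (nbr y @ Q') k b (r - k) (Suc z) s)
                else False)
             else if \<sigma> ! y = Skipped then
               (if 0 < b \<and> 0 < r then search N nbr n (Grow (\<sigma>[y := Cut]) Q' k (b - 1) (r - 1) z s)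
                else False)
             else search N nbr n (Grow \<sigma> Q' k b r z s))))"

locale index_graph =
  fixes N :: nat and nbr :: "nat \<Rightarrow> nat list"
  assumes nbr_less: "v < N \<Longrightarrow> u \<in> set (nbr v) \<Longrightarrow> u < N"
    and nbr_sym: "v < N \<Longrightarrow> u \<in> set (nbr v) \<Longrightarrow> v \<in> set (nbr u)"
begin

abbreviation adj :: "nat \<Rightarrow> nat \<Rightarrow> bool" where
  "adj u v \<equiv> v \<in> set (nbr u)"

lemma symp_on_adj: "X \<subseteq> {..<N} \<Longrightarrow> symp_on X adj"
  using nbr_sym by (auto simp: symp_on_def)

definition marked :: "status \<Rightarrow> status list \<Rightarrow> nat set" where
  "marked z \<sigma> = {v. v < N \<and> \<sigma> ! v = z}"

definition live :: "status list \<Rightarrow> nat set" where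
  "live \<sigma> = {v. v < N \<and> \<sigma> ! v \<noteq> Gone}"

lemma live_subset: "live \<sigma> \<subseteq> {..<N}"
  by (auto simp: live_def)

lemma finite_live [simp]: "finite (live \<sigma>)"
  by (simp add: live_def)

lemma finite_marked [simp]: "finite (marked z \<sigma>)"
  by (simp add: marked_def)

lemma marked_subset_live: "z \<noteq> Gone \<Longrightarrow> marked z \<sigma> \<subseteq> live \<sigma>"
  by (auto simp: marked_def live_def)

lemma marked_update:
  "length \<sigma> = N \<Longrightarrow> y < N \<Longrightarrow>
    marked z (\<sigma>[y := z']) = (if z = z' then insert y (marked z \<sigma>) else marked z \<sigma> - {y})"
  by (auto simp: marked_def nth_list_update)

lemma live_update:
  "length \<sigma> = N \<Longrightarrow> y < N \<Longrightarrow> \<sigma> ! y \<noteq> Gone \<Longrightarrow> z \<noteq> Gone \<Longrightarrow> live (\<sigma>[y := z]) = live \<sigma>"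
  by (auto simp: live_def nth_list_update)

lemma live_level_reset:
  "length \<sigma> = N \<Longrightarrow> live (map level_reset \<sigma>) = live \<sigma> - marked Grown \<sigma> - marked Cut \<sigma>"
  by (auto simp: live_def marked_def elim!: level_reset.elims)

lemma marked_level_reset:
  "length \<sigma> = N \<Longrightarrow> z \<noteq> Free \<Longrightarrow> z \<noteq> Gone \<Longrightarrow> marked z (map level_reset \<sigma>) = {}"
  by (auto simp: marked_def) (metis level_reset.simps status.exhaust)

definition separation :: "nat set \<Rightarrow> nat set \<Rightarrow> nat set set \<Rightarrow> nat set \<Rightarrow> nat \<Rightarrow> nat \<Rightarrow> bool" where
  "separation W F cs C k s \<longleftrightarrow> F \<subseteq> W \<and> cs \<subseteq> components (W - F) adj \<and> k \<le> card cs \<and>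
     (\<forall>D\<in>cs. s \<le> card D) \<and> C \<in> cs \<and> (\<forall>D\<in>cs. card C \<le> card D)"

lemma separation_card_bound:
  assumes sep: "separation W F cs C k s" and W: "W \<subseteq> {..<N}"
  shows "k * card C + card F \<le> card W"
proof -
  have fin: "finite W"
    using W finite_subset by blast
  have "symp_on (W - F) adj"
    using W by (intro symp_on_adj) auto
  then have "card cs * card C \<le> card (W - F)"
    using sep fin by (intro card_components_mult_le) (auto simp: separation_def)
  moreover have "k * card C \<le> card cs * card C"
    using sep by (simp add: separation_def)
  moreover have "card (W - F) = card W - card F" "card F \<le> card W"
    using sep fin by (auto simp: separation_def card_Diff_subset finite_subset card_mono)
  ultimately show ?thesis
    by linarith
qed

lemma separation_Diff_component:
  assumes sep: "separation W F cs C k s" and W: "W \<subseteq> {..<N}" and "F' \<subseteq> F" and "1 < k"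
  obtains C' where "separation (W - C - F') (F - F') (cs - {C}) C' (k - 1) (card C)"
proof -
  let ?cs = "cs - {C}"
  have C: "C \<in> components (W - F) adj" and cs: "cs \<subseteq> components (W - F) adj"
    using sep by (auto simp: separation_def)
  have C_sub: "C \<subseteq> W - F"
    using components_subset[OF C] .
  have "W - C - F' - (F - F') = (W - F) - C"
    using \<open>F' \<subseteq> F\<close> by auto
  then have "?cs \<subseteq> components (W - C - F' - (F - F')) adj"
    using component_Diff_component[OF symp_on_adj C] cs W by auto
  moreover have "k - 1 \<le> card ?cs"
    using sep by (auto simp: separation_def card_Diff_singleton_if)
  moreover obtain C' where "C' \<in> ?cs" "\<forall>D\<in>?cs. card C' \<le> card D"
  proof -
    have "?cs \<noteq> {}"
      using \<open>k - 1 \<le> card ?cs\<close> \<open>1 < k\<close> by (intro notI) simp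
    then show ?thesis
      using that ex_has_least_nat[of "\<lambda>D. D \<in> ?cs" _ card] by blast
  qed
  moreover have "F - F' \<subseteq> W - C - F'"
    using sep C_sub by (auto simp: separation_def)
  ultimately show ?thesis
    using that sep by (auto simp: separation_def)
qed

definition level_inv :: "status list \<Rightarrow> nat \<Rightarrow> nat \<Rightarrow> nat \<Rightarrow> nat \<Rightarrow> nat set \<Rightarrow> nat set set \<Rightarrow> nat set \<Rightarrow> bool" where
  "level_inv \<sigma> k b s w F cs C \<longleftrightarrow> length \<sigma> = N \<and> separation (live \<sigma>) F cs C k s \<and> card F \<le> b \<and>
     marked Cut \<sigma> = {} \<and> marked Grown \<sigma> = {} \<and> marked Skipped \<sigma> \<inter> C = {} \<and> w = card (live \<sigma>)"

definition grow_inv ::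
    "status list \<Rightarrow> nat list \<Rightarrow> nat \<Rightarrow> nat \<Rightarrow> nat \<Rightarrow> nat \<Rightarrow> nat \<Rightarrow> nat set \<Rightarrow> nat set set \<Rightarrow> nat set \<Rightarrow> bool" where
  "grow_inv \<sigma> Q k b r z s F cs C \<longleftrightarrow> length \<sigma> = N \<and> separation (live \<sigma>) F cs C k s \<and>
     marked Cut \<sigma> \<subseteq> F \<and> card F \<le> b + card (marked Cut \<sigma>) \<and>
     marked Grown \<sigma> \<noteq> {} \<and> marked Grown \<sigma> \<subseteq> C \<and> marked Skipped \<sigma> \<inter> C = {} \<and>
     z = card (marked Grown \<sigma>) \<and> r + k * z + card (marked Cut \<sigma>) = card (live \<sigma>) \<and>
     (\<forall>y\<in>set Q. \<exists>x\<in>marked Grown \<sigma>. adj x y) \<and>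
     (\<forall>x\<in>marked Grown \<sigma>. \<forall>y\<in>live \<sigma>. adj x y \<longrightarrow> y \<in> marked Grown \<sigma> \<union> marked Cut \<sigma> \<union> set Q)"

fun task_inv :: "task \<Rightarrow> bool" where
  "task_inv (Seed \<sigma> k b s w v) \<longleftrightarrow> (\<exists>F cs C. level_inv \<sigma> k b s w F cs C \<and> C \<subseteq> {v..})"
| "task_inv (Grow \<sigma> Q k b r z s) \<longleftrightarrow> (\<exists>F cs C. grow_inv \<sigma> Q k b r z s F cs C)"

lemma level_inv_start_grow:
  assumes inv: "level_inv \<sigma> k b s w F cs C" and v: "v \<in> C"
  shows "\<sigma> ! v = Free" "k \<le> w" "grow_inv (\<sigma>[v := Grown]) (nbr v) k b (w - k) 1 s F cs C"
proof -
  from inv have len: "length \<sigma> = N" and sep: "separation (live \<sigma>) F cs C k s" and "card F \<le> b"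
    and no_cut: "marked Cut \<sigma> = {}" and no_grown: "marked Grown \<sigma> = {}"
    and skipped: "marked Skipped \<sigma> \<inter> C = {}" and w: "w = card (live \<sigma>)"
    by (auto simp: level_inv_def)
  have C: "C \<in> components (live \<sigma> - F) adj"
    using sep by (auto simp: separation_def)
  have "v \<in> live \<sigma>"
    using components_subset[OF C] v by blast
  then have vN: "v < N" and "\<sigma> ! v \<noteq> Gone"
    by (auto simp: live_def)
  with no_cut no_grown skipped v show free: "\<sigma> ! v = Free"
    by (cases "\<sigma> ! v") (auto simp: marked_def)
  have "1 \<le> card C"
    using v components_subset[OF C] finite_subset[of C "live \<sigma>"] by (auto simp: Suc_le_eq card_gt_0_iff)
  then show kw: "k \<le> w"
    using separation_card_bound[OF sep live_subset] w
    by (metis add_leD1 mult.right_neutral mult_le_mono2 order_trans)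
  have grown: "marked Grown (\<sigma>[v := Grown]) = {v}"
    using len vN no_grown by (simp add: marked_update)
  have live: "live (\<sigma>[v := Grown]) = live \<sigma>"
    using len vN \<open>\<sigma> ! v \<noteq> Gone\<close> by (simp add: live_update)
  show "grow_inv (\<sigma>[v := Grown]) (nbr v) k b (w - k) 1 s F cs C"
    unfolding grow_inv_def grown live
    using len vN sep \<open>card F \<le> b\<close> no_cut skipped v kw w
    by (simp add: marked_update) blast
qed

lemma level_inv_skip:
  assumes "level_inv \<sigma> k b s w F cs C" "v < N" "\<sigma> ! v = Free" "v \<notin> C"
  shows "level_inv (\<sigma>[v := Skipped]) k b s w F cs C"
  using assms by (auto simp: level_inv_def live_update marked_update)

lemma search_Seed_step:
  assumes IH: "\<And>t. task_inv t \<Longrightarrow> search N nbr n t"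
    and inv: "level_inv \<sigma> k b s w F cs C" and later: "C \<subseteq> {v..}"
  shows "search N nbr (Suc n) (Seed \<sigma> k b s w v)"
proof -
  have C: "C \<in> components (live \<sigma> - F) adj"
    using inv by (auto simp: level_inv_def separation_def)
  obtain c where "c \<in> C"
    using components_nonempty[OF C] by blast
  then have "c < N" "v \<le> c"
    using components_subset[OF C] live_subset later by auto
  then have vN: "v < N"
    by simp
  show ?thesis
  proof (cases "v \<in> C")
    case True
    then have "task_inv (Grow (\<sigma>[v := Grown]) (nbr v) k b (w - k) 1 s)"
      using level_inv_start_grow(3)[OF inv] by auto
    with IH level_inv_start_grow[OF inv True] vN show ?thesis
      by simp
  next
    case False
    then have later': "C \<subseteq> {Suc v..}"
      using later by (auto simp: Suc_le_eq order_le_less)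
    show ?thesis
    proof (cases "\<sigma> ! v = Free")
      case True
      have "task_inv (Seed (\<sigma>[v := Skipped]) k b s w (Suc v))"
        using level_inv_skip[OF inv vN True False] later' by auto
      with IH level_inv_start_grow(2)[OF inv \<open>c \<in> C\<close>] vN True show ?thesis
        by simp
    next
      case False
      have "task_inv (Seed \<sigma> k b s w (Suc v))"
        using inv later' by auto
      with IH vN False show ?thesis
        by simp
    qed
  qed
qed

lemma grow_inv_head_less:
  assumes "grow_inv \<sigma> (y # Q) k b r z s F cs C"
  shows "y < N"
proof -
  obtain x where "x \<in> marked Grown \<sigma>" "adj x y"
    using assms unfolding grow_inv_def by auto
  then show ?thesis
    using nbr_less by (auto simp: marked_def)
qed

lemma grow_inv_head_in_component:
  assumes inv: "grow_inv \<sigma> (y # Q) k b r z s F cs C" and "y \<notin> F" and "\<sigma> ! y \<noteq> Gone"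
  shows "y \<in> C"
proof -
  obtain x where x: "x \<in> marked Grown \<sigma>" "adj x y"
    using inv unfolding grow_inv_def by auto
  have C: "C \<in> components (live \<sigma> - F) adj"
    using inv by (auto simp: grow_inv_def separation_def)
  have "y \<in> live \<sigma> - F"
    using grow_inv_head_less[OF inv] assms(2,3) by (auto simp: live_def)
  moreover have "marked Grown \<sigma> \<subseteq> C"
    using inv by (simp add: grow_inv_def)
  ultimately show ?thesis
    using component_closed[OF symp_on_adj C] x live_subset by blast
qed

lemma grow_inv_finite_component:
  assumes "grow_inv \<sigma> Q k b r z s F cs C"
  shows "finite C"
proof -
  have "C \<in> components (live \<sigma> - F) adj"
    using assms by (auto simp: grow_inv_def separation_def)
  then have "C \<subseteq> live \<sigma>"
    using components_subset by blast
  then show ?thesis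
    by (rule finite_subset) simp
qed

lemma grow_inv_cut:
  assumes inv: "grow_inv \<sigma> (y # Q) k b r z s F cs C" and "y \<in> F"
    and free: "\<sigma> ! y = Free \<or> \<sigma> ! y = Skipped"
  shows "0 < b" "0 < r" "grow_inv (\<sigma>[y := Cut]) Q k (b - 1) (r - 1) z s F cs C"
proof -
  from inv have len: "length \<sigma> = N" and sep: "separation (live \<sigma>) F cs C k s"
    and cut: "marked Cut \<sigma> \<subseteq> F" and budget: "card F \<le> b + card (marked Cut \<sigma>)"
    and grown: "marked Grown \<sigma> \<subseteq> C" and z: "z = card (marked Grown \<sigma>)"
    and slack: "r + k * z + card (marked Cut \<sigma>) = card (live \<sigma>)"
    by (auto simp: grow_inv_def)
  have yN: "y < N"
    by (rule grow_inv_head_less[OF inv])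
  have "finite F"
    using sep finite_subset[of F "live \<sigma>"] by (simp add: separation_def)
  have "y \<notin> marked Cut \<sigma>"
    using free by (auto simp: marked_def)
  then have "Suc (card (marked Cut \<sigma>)) \<le> card F"
    using cut \<open>y \<in> F\<close> \<open>finite F\<close> card_mono[of F "insert y (marked Cut \<sigma>)"] by simp
  then show "0 < b"
    using budget by linarith
  have "z \<le> card C"
    using grown z grow_inv_finite_component[OF inv] by (simp add: card_mono)
  then have "k * z \<le> k * card C"
    by simp
  with separation_card_bound[OF sep live_subset] slack \<open>Suc (card (marked Cut \<sigma>)) \<le> card F\<close>
  show "0 < r"
    by linarith
  have live: "live (\<sigma>[y := Cut]) = live \<sigma>"
    using live_update[OF len yN] free by auto
  have marked: "marked Cut (\<sigma>[y := Cut]) = insert y (marked Cut \<sigma>)"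
    "marked Grown (\<sigma>[y := Cut]) = marked Grown \<sigma>"
    "marked Skipped (\<sigma>[y := Cut]) = marked Skipped \<sigma> - {y}"
    using marked_update[OF len yN] free \<open>y \<notin> marked Cut \<sigma>\<close> by (auto simp: marked_def)
  show "grow_inv (\<sigma>[y := Cut]) Q k (b - 1) (r - 1) z s F cs C"
    unfolding grow_inv_def live marked
  proof (intro conjI)
    show "card F \<le> b - 1 + card (insert y (marked Cut \<sigma>))"
      using budget \<open>0 < b\<close> \<open>y \<notin> marked Cut \<sigma>\<close> by simp
    show "r - 1 + k * z + card (insert y (marked Cut \<sigma>)) = card (live \<sigma>)"
      using slack \<open>0 < r\<close> \<open>y \<notin> marked Cut \<sigma>\<close> by simp
    show "\<forall>x\<in>marked Grown \<sigma>. \<forall>v\<in>live \<sigma>. adj x v \<longrightarrow> v \<in> marked Grown \<sigma> \<union> insert y (marked Cut \<sigma>) \<union> set Q"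
      using inv by (auto simp: grow_inv_def)
  qed (use inv cut \<open>y \<in> F\<close> in \<open>auto simp: grow_inv_def\<close>)
qed

lemma grow_inv_extend:
  assumes inv: "grow_inv \<sigma> (y # Q) k b r z s F cs C" and "y \<notin> F"
    and free: "\<sigma> ! y = Free \<or> \<sigma> ! y = Skipped"
  shows "\<sigma> ! y = Free" "k \<le> r" "grow_inv (\<sigma>[y := Grown]) (nbr y @ Q) k b (r - k) (Suc z) s F cs C"
proof -
  from inv have len: "length \<sigma> = N" and sep: "separation (live \<sigma>) F cs C k s"
    and grown: "marked Grown \<sigma> \<subseteq> C" and skipped: "marked Skipped \<sigma> \<inter> C = {}"
    and z: "z = card (marked Grown \<sigma>)"
    and slack: "r + k * z + card (marked Cut \<sigma>) = card (live \<sigma>)"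
    and cut: "marked Cut \<sigma> \<subseteq> F"
    by (auto simp: grow_inv_def)
  have yN: "y < N"
    by (rule grow_inv_head_less[OF inv])
  have "y \<in> C"
    using grow_inv_head_in_component[OF inv \<open>y \<notin> F\<close>] free by auto
  with free skipped yN show free': "\<sigma> ! y = Free"
    by (auto simp: marked_def)
  have "y \<notin> marked Grown \<sigma>"
    using free' by (auto simp: marked_def)
  then have "Suc z \<le> card C"
    using z grown \<open>y \<in> C\<close> grow_inv_finite_component[OF inv] card_mono[of C "insert y (marked Grown \<sigma>)"]
    by simp
  then have "k * Suc z \<le> k * card C"
    by (rule mult_le_mono2)
  moreover have "card (marked Cut \<sigma>) \<le> card F"
    using cut sep finite_subset[of F "live \<sigma>"] by (simp add: separation_def card_mono)
  ultimately show "k \<le> r"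
    using separation_card_bound[OF sep live_subset] slack by simp
  have live: "live (\<sigma>[y := Grown]) = live \<sigma>"
    using live_update[OF len yN] free' by auto
  have marked: "marked Grown (\<sigma>[y := Grown]) = insert y (marked Grown \<sigma>)"
    "marked Cut (\<sigma>[y := Grown]) = marked Cut \<sigma>"
    "marked Skipped (\<sigma>[y := Grown]) = marked Skipped \<sigma>"
    using marked_update[OF len yN] free' by (auto simp: marked_def)
  show "grow_inv (\<sigma>[y := Grown]) (nbr y @ Q) k b (r - k) (Suc z) s F cs C"
    unfolding grow_inv_def live marked
  proof (intro conjI)
    show "insert y (marked Grown \<sigma>) \<subseteq> C"
      using grown \<open>y \<in> C\<close> by simp
    show "Suc z = card (insert y (marked Grown \<sigma>))"
      using z \<open>y \<notin> marked Grown \<sigma>\<close> by simp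
    show "r - k + k * Suc z + card (marked Cut \<sigma>) = card (live \<sigma>)"
      using slack \<open>k \<le> r\<close> by simp
    show "\<forall>v\<in>set (nbr y @ Q). \<exists>x\<in>insert y (marked Grown \<sigma>). adj x v"
      using inv by (auto simp: grow_inv_def)
    show "\<forall>x\<in>insert y (marked Grown \<sigma>). \<forall>v\<in>live \<sigma>. adj x v \<longrightarrow>
        v \<in> insert y (marked Grown \<sigma>) \<union> marked Cut \<sigma> \<union> set (nbr y @ Q)"
      using inv by (auto simp: grow_inv_def)
  qed (use inv in \<open>auto simp: grow_inv_def\<close>)
qed

lemma grow_inv_pass:
  assumes inv: "grow_inv \<sigma> (y # Q) k b r z s F cs C" and "\<sigma> ! y \<noteq> Free" "\<sigma> ! y \<noteq> Skipped"
  shows "grow_inv \<sigma> Q k b r z s F cs C"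
proof -
  have "y < N"
    by (rule grow_inv_head_less[OF inv])
  then have "y \<notin> live \<sigma> \<or> y \<in> marked Grown \<sigma> \<union> marked Cut \<sigma>"
    using assms(2,3) by (cases "\<sigma> ! y") (auto simp: live_def marked_def)
  then show ?thesis
    using inv unfolding grow_inv_def by auto
qed

lemma grow_inv_component_complete:
  assumes inv: "grow_inv \<sigma> [] k b r z s F cs C"
  shows "marked Grown \<sigma> = C"
proof -
  from inv have sep: "separation (live \<sigma>) F cs C k s" and cut: "marked Cut \<sigma> \<subseteq> F"
    and grown: "marked Grown \<sigma> \<noteq> {}" "marked Grown \<sigma> \<subseteq> C"
    and closed: "\<forall>x\<in>marked Grown \<sigma>. \<forall>y\<in>live \<sigma>. adj x y \<longrightarrow> y \<in> marked Grown \<sigma> \<union> marked Cut \<sigma>"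
    by (auto simp: grow_inv_def)
  have C: "C \<in> components (live \<sigma> - F) adj"
    using sep by (auto simp: separation_def)
  obtain x where "x \<in> marked Grown \<sigma>"
    using grown(1) by blast
  have "C = marked Grown \<sigma>"
  proof (rule component_eqI[OF symp_on_adj C \<open>x \<in> marked Grown \<sigma>\<close> grown(2)])
    show "live \<sigma> - F \<subseteq> {..<N}"
      using live_subset by blast
    show "v \<in> marked Grown \<sigma>" if "u \<in> marked Grown \<sigma>" "v \<in> live \<sigma> - F" "adj u v" for u v
      using closed cut that by blast
  qed
  then show ?thesis ..
qed

lemma grow_inv_next_level:
  assumes inv: "grow_inv \<sigma> [] k b r z s F cs C" and "2 < k"
  shows "task_inv (Seed (map level_reset \<sigma>) (k - 1) b z (r + (k - 1) * z) 0)"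
proof -
  let ?\<sigma> = "map level_reset \<sigma>"
  from inv have len: "length \<sigma> = N" and sep: "separation (live \<sigma>) F cs C k s"
    and cut: "marked Cut \<sigma> \<subseteq> F" and budget: "card F \<le> b + card (marked Cut \<sigma>)"
    and z: "z = card (marked Grown \<sigma>)"
    and slack: "r + k * z + card (marked Cut \<sigma>) = card (live \<sigma>)"
    by (auto simp: grow_inv_def)
  have grown: "marked Grown \<sigma> = C"
    by (rule grow_inv_component_complete[OF inv])
  have live: "live ?\<sigma> = live \<sigma> - C - marked Cut \<sigma>"
    using live_level_reset[OF len] grown by simp
  obtain C' where sep': "separation (live ?\<sigma>) (F - marked Cut \<sigma>) (cs - {C}) C' (k - 1) z"
    using separation_Diff_component[OF sep live_subset cut] \<open>2 < k\<close> z grown live by auto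
  have "C \<in> components (live \<sigma> - F) adj"
    using sep by (auto simp: separation_def)
  then have C_sub: "C \<subseteq> live \<sigma> - F"
    by (rule components_subset)
  have "finite F"
    using sep finite_subset[of F "live \<sigma>"] by (simp add: separation_def)
  then have "card (F - marked Cut \<sigma>) \<le> b"
    using budget cut by (simp add: card_Diff_subset finite_subset)
  moreover have "r + (k - 1) * z = card (live ?\<sigma>)"
  proof -
    have "marked Cut \<sigma> \<subseteq> live \<sigma> - C"
      using C_sub cut marked_subset_live[of Cut \<sigma>] by auto
    then have "card (live ?\<sigma>) = card (live \<sigma> - C) - card (marked Cut \<sigma>)"
      unfolding live by (simp add: card_Diff_subset)
    moreover have "card (live \<sigma> - C) = card (live \<sigma>) - card C"
      using C_sub finite_subset[of C "live \<sigma>"] card_Diff_subset[of C "live \<sigma>"] by auto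
    moreover have "k * z = (k - 1) * z + z"
      using \<open>2 < k\<close> by (cases k) auto
    ultimately show ?thesis
      using slack z grown by simp
  qed
  ultimately have "level_inv ?\<sigma> (k - 1) b z (r + (k - 1) * z) (F - marked Cut \<sigma>) (cs - {C}) C'"
    using len sep' by (simp add: level_inv_def marked_level_reset)
  then show ?thesis
    by auto
qed

lemma search_Grow_step:
  assumes IH: "\<And>t. task_inv t \<Longrightarrow> search N nbr n t"
    and inv: "grow_inv \<sigma> Q k b r z s F cs C"
  shows "search N nbr (Suc n) (Grow \<sigma> Q k b r z s)"
proof (cases Q)
  case Nil
  have "s \<le> z"
    using inv grow_inv_component_complete[OF inv[unfolded Nil]]
    by (auto simp: grow_inv_def separation_def)
  show ?thesis
  proof (cases "k \<le> 2")
    case False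
    then have "search N nbr n (Seed (map level_reset \<sigma>) (k - 1) b z (r + (k - 1) * z) 0)"
      using grow_inv_next_level[OF inv[unfolded Nil]] by (intro IH) simp
    with Nil \<open>s \<le> z\<close> show ?thesis
      by simp
  qed (use Nil \<open>s \<le> z\<close> in simp)
next
  case (Cons y Q')
  with inv have inv': "grow_inv \<sigma> (y # Q') k b r z s F cs C"
    by simp
  consider (cut) "y \<in> F" "\<sigma> ! y = Free \<or> \<sigma> ! y = Skipped"
    | (extend) "y \<notin> F" "\<sigma> ! y = Free \<or> \<sigma> ! y = Skipped"
    | (pass) "\<sigma> ! y \<noteq> Free" "\<sigma> ! y \<noteq> Skipped"
    by blast
  then show ?thesis
  proof cases
    case cut
    have "search N nbr n (Grow (\<sigma>[y := Cut]) Q' k (b - 1) (r - 1) z s)"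
      using grow_inv_cut(3)[OF inv' cut] by (intro IH) auto
    with grow_inv_cut(1,2)[OF inv' cut] cut(2) Cons show ?thesis
      by auto
  next
    case extend
    have "search N nbr n (Grow (\<sigma>[y := Grown]) (nbr y @ Q') k b (r - k) (Suc z) s)"
      using grow_inv_extend(3)[OF inv' extend] by (intro IH) auto
    with grow_inv_extend(1,2)[OF inv' extend] Cons show ?thesis
      by simp
  next
    case pass
    have "search N nbr n (Grow \<sigma> Q' k b r z s)"
      using grow_inv_pass[OF inv' pass] by (intro IH) auto
    with pass Cons show ?thesis
      by simp
  qed
qed

theorem search_sound: "task_inv t \<Longrightarrow> search N nbr n t"
proof (induction n arbitrary: t)
  case 0
  show ?case
    by simp
next
  case (Suc n)
  show ?case
  proof (cases t)
    case (Seed \<sigma> k b s w v)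
    with Suc.prems obtain F cs C where "level_inv \<sigma> k b s w F cs C" "C \<subseteq> {v..}"
      by auto
    with Seed show ?thesis
      using search_Seed_step[OF Suc.IH] by blast
  next
    case (Grow \<sigma> Q k b r z s)
    with Suc.prems obtain F cs C where "grow_inv \<sigma> Q k b r z s F cs C"
      by auto
    with Grow show ?thesis
      using search_Grow_step[OF Suc.IH] by blast
  qed
qed

theorem card_components_less_if_search_fails:
  assumes fails: "\<not> search N nbr n (Grow ((replicate N Free)[v := Grown]) (nbr v) k b (N - k) 1 1)"
    and F: "F \<subseteq> {..<N}" "card F \<le> b"
    and C: "C \<in> components ({..<N} - F) adj" "v \<in> C"
    and smallest: "\<forall>D\<in>components ({..<N} - F) adj. card C \<le> card D"
  shows "card (components ({..<N} - F) adj) < k"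
proof (rule ccontr)
  assume "\<not> ?thesis"
  let ?\<sigma> = "replicate N Free" and ?cs = "components ({..<N} - F) adj"
  have live: "live ?\<sigma> = {..<N}"
    by (auto simp: live_def)
  have "1 \<le> card D" if "D \<in> ?cs" for D
  proof -
    have "D \<noteq> {}" "D \<subseteq> {..<N}"
      using components_nonempty[OF that] components_subset[OF that] by auto
    then show ?thesis
      using finite_subset[of D "{..<N}"] by (simp add: Suc_le_eq card_gt_0_iff)
  qed
  with F C smallest \<open>\<not> ?thesis\<close> have "level_inv ?\<sigma> k b 1 N F ?cs C"
    unfolding level_inv_def separation_def live by (auto simp: marked_def)
  then have "grow_inv (?\<sigma>[v := Grown]) (nbr v) k b (N - k) 1 1 F ?cs C"
    by (rule level_inv_start_grow(3)[OF _ C(2)])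
  then have "task_inv (Grow (?\<sigma>[v := Grown]) (nbr v) k b (N - k) 1 1)"
    by auto
  with fails search_sound show False
    by blast
qed

lemma card_components_less_if_search_fails_iso:
  assumes fails: "\<not> search N nbr n (Grow ((replicate N Free)[v := Grown]) (nbr v) k b (N - k) 1 1)"
    and iso: "bij_betw h {..<N} V" "\<And>i j. i < N \<Longrightarrow> j < N \<Longrightarrow> E (h i) (h j) \<longleftrightarrow> adj i j"
    and F: "F \<subseteq> V" "card F \<le> b"
    and C: "C \<in> components (V - F) E" "v < N" "h v \<in> C"
    and smallest: "\<forall>D\<in>components (V - F) E. card C \<le> card D"
  shows "card (components (V - F) E) < k"
proof -
  let ?F = "{i \<in> {..<N}. h i \<in> F}"
  let ?X = "{..<N} - ?F"
  have inj: "inj_on h {..<N}" and range: "h ` {..<N} = V"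
    using iso(1) by (auto simp: bij_betw_def)
  have inj_X: "inj_on h ?X"
    using inj by (rule inj_on_subset) blast
  have hom_X: "E (h i) (h j) \<longleftrightarrow> adj i j" if "i \<in> ?X" "j \<in> ?X" for i j
    using iso(2) that by blast
  have "h ` ?X = V - F"
    using range by auto
  then have comps: "components (V - F) E = image h ` components ?X adj"
    and card_comps: "card (components (V - F) E) = card (components ?X adj)"
    using components_image[of h ?X E adj, OF inj_X hom_X] card_components_image[of h ?X E adj, OF inj_X hom_X]
    by simp_all
  have card_image_h: "card (h ` D) = card D" if "D \<subseteq> {..<N}" for D
    using inj_on_subset[OF inj that] by (rule card_image)
  have "h ` ?F = F"
    using F(1) range by auto
  then have "card ?F \<le> b"
    using F(2) card_image_h[of ?F] by fastforce
  obtain C' where C': "C' \<in> components ({..<N} - ?F) adj" "C = h ` C'"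
    using C(1) comps by auto
  have C'_sub: "C' \<subseteq> {..<N}"
    using components_subset[OF C'(1)] by blast
  have "v \<in> C'"
    using C(2,3) C'(2) C'_sub inj by (auto dest: inj_onD)
  moreover have "\<forall>D\<in>components ({..<N} - ?F) adj. card C' \<le> card D"
  proof
    fix D
    assume D: "D \<in> components ({..<N} - ?F) adj"
    then have "h ` D \<in> components (V - F) E" and "D \<subseteq> {..<N}"
      using comps components_subset[OF D] by auto
    then show "card C' \<le> card D"
      using smallest C'(2) C'_sub card_image_h by fastforce
  qed
  ultimately show ?thesis
    unfolding card_comps using card_components_less_if_search_fails[OF fails _ \<open>card ?F \<le> b\<close> C'(1)] by blast
qed

end

section \<open>The split-star S_4^2\<close>

definition S42_perms :: "nat list list" where
  "S42_perms =
    [[1,2,3,4], [1,2,4,3], [1,3,2,4], [1,3,4,2], [1,4,2,3], [1,4,3,2],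
     [2,1,3,4], [2,1,4,3], [2,3,1,4], [2,3,4,1], [2,4,1,3], [2,4,3,1],
     [3,1,2,4], [3,1,4,2], [3,2,1,4], [3,2,4,1], [3,4,1,2], [3,4,2,1],
     [4,1,2,3], [4,1,3,2], [4,2,1,3], [4,2,3,1], [4,3,1,2], [4,3,2,1]]"

definition S42_nbr :: "nat \<Rightarrow> nat list" where
  "S42_nbr v =
    [[6, 12, 8, 19, 11], [7, 18, 10, 13, 9], [12, 6, 14, 18, 17], [13, 19, 16, 7, 15],
     [18, 7, 20, 12, 23], [19, 13, 22, 6, 21], [0, 14, 2, 21, 5], [1, 20, 4, 15, 3],
     [14, 0, 12, 20, 16], [15, 21, 17, 1, 13], [20, 1, 18, 14, 22], [21, 15, 23, 0, 19],
     [2, 8, 0, 23, 4], [3, 22, 5, 9, 1], [8, 2, 6, 22, 10], [9, 23, 11, 3, 7],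
     [22, 3, 19, 8, 20], [23, 9, 21, 2, 18], [4, 10, 1, 17, 2], [5, 16, 3, 11, 0],
     [10, 4, 7, 16, 8], [11, 17, 9, 5, 6], [16, 5, 13, 10, 14], [17, 11, 15, 4, 12]] ! v"

lemma S42_E_iff_generators: "S42_E p q \<longleftrightarrow> q \<in> set [g12 p, gplus 3 p, gminus 3 p, gplus 4 p, gminus 4 p]"
  by (auto simp: S42_E_def)

lemma S42_nbr_generators:
  "map (\<lambda>v. map ((!) S42_perms) (S42_nbr v)) [0..<24]
    = map (\<lambda>p. [g12 p, gplus 3 p, gminus 3 p, gplus 4 p, gminus 4 p]) S42_perms"
  by (simp add: S42_perms_def S42_nbr_def g12_def gplus_def gminus_def upt_rec)

lemma S42_nbr_sym:
  "list_all (\<lambda>v. list_all (\<lambda>u. u < 24 \<and> v \<in> set (S42_nbr u)) (S42_nbr v)) [0..<24]"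
  by (simp add: S42_nbr_def upt_rec)

lemma distinct_S42_perms: "distinct S42_perms" and length_S42_perms: "length S42_perms = 24"
  by (simp_all add: S42_perms_def)

lemma S42_V_eq: "S42_V = set S42_perms"
proof
  show "set S42_perms \<subseteq> S42_V"
    by (auto simp: S42_perms_def S42_V_def)
  show "S42_V \<subseteq> set S42_perms"
  proof
    fix p
    assume "p \<in> S42_V"
    then have p: "length p = 4" "distinct p" "set p = {1, 2, 3, 4}"
      by (auto simp: S42_V_def)
    then obtain a b c d where abcd: "p = [a, b, c, d]"
      by (auto simp: numeral_eq_Suc length_Suc_conv)
    have "a \<in> {1, 2, 3, 4}" "b \<in> {1, 2, 3, 4}" "c \<in> {1, 2, 3, 4}" "d \<in> {1, 2, 3, 4}"
      using p(3) abcd by auto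
    with p(2) show "p \<in> set S42_perms"
      unfolding abcd by (elim insertE emptyE) (simp_all add: S42_perms_def)
  qed
qed

lemma S42_VD: "p \<in> S42_V \<Longrightarrow> length p = 4" "p \<in> S42_V \<Longrightarrow> set p = {1, 2, 3, 4}"
  by (simp_all add: S42_V_def)

interpretation S42: index_graph 24 S42_nbr
proof
  have "\<forall>v\<in>{..<24}. \<forall>u\<in>set (S42_nbr v). u < 24 \<and> v \<in> set (S42_nbr u)"
    using S42_nbr_sym by (simp only: list_all_iff set_upt lessThan_atLeast0)
  then show "u < 24" "v \<in> set (S42_nbr u)" if "v < 24" "u \<in> set (S42_nbr v)" for u v :: nat
    using that by blast+
qed

lemma S42_E_nth_perms_iff:
  assumes "i < 24" "j < 24"
  shows "S42_E (S42_perms ! i) (S42_perms ! j) \<longleftrightarrow> j \<in> set (S42_nbr i)"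
proof -
  have nbrs: "set (S42_nbr i) \<subseteq> {..<24}"
    using S42.nbr_less assms(1) by auto
  have "map ((!) S42_perms) (S42_nbr i) = [g12 p, gplus 3 p, gminus 3 p, gplus 4 p, gminus 4 p]"
    if "p = S42_perms ! i" for p
    using arg_cong[OF S42_nbr_generators, of "\<lambda>xs. xs ! i"] assms(1) that length_S42_perms by simp
  then have "S42_E (S42_perms ! i) q \<longleftrightarrow> q \<in> (!) S42_perms ` set (S42_nbr i)" for q
    unfolding S42_E_iff_generators by (metis list.set_map)
  moreover have "inj_on ((!) S42_perms) {..<24}"
    using inj_on_nth[OF distinct_S42_perms] length_S42_perms by auto
  ultimately show ?thesis
    using nbrs assms(2) by (auto dest: inj_onD)
qed

lemma S42_E_Cons4_iff:
  "S42_E [a, b, c, d] q \<longleftrightarrow> q \<in> {[b, a, c, d], [c, a, b, d], [b, c, a, d], [d, a, c, b], [b, d, c, a]}"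
  by (auto simp: S42_E_def g12_def gplus_def gminus_def)

lemma S42_E_relabel:
  assumes "length p = 4" "inj_on f (set p \<union> set q)"
  shows "S42_E (map f p) (map f q) \<longleftrightarrow> S42_E p q"
proof -
  obtain a b c d where p: "p = [a, b, c, d]"
    using assms(1) by (auto simp: numeral_eq_Suc length_Suc_conv)
  let ?R = "{[b, a, c, d], [c, a, b, d], [b, c, a, d], [d, a, c, b], [b, d, c, a]}"
  have eq: "map f q = map f r \<longleftrightarrow> q = r" if "r \<in> ?R" for r
  proof -
    have "set r = set p"
      using that p by auto
    then show ?thesis
      using assms(2) inj_on_map_eq_map[of f q r] by (simp add: Un_commute)
  qed
  have "S42_E (map f p) (map f q) \<longleftrightarrow> (\<exists>r\<in>?R. map f q = map f r)"
    unfolding p by (simp add: S42_E_Cons4_iff)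
  also have "\<dots> \<longleftrightarrow> q \<in> ?R"
    using eq by blast
  also have "\<dots> \<longleftrightarrow> S42_E p q"
    unfolding p by (simp add: S42_E_Cons4_iff)
  finally show ?thesis .
qed

lemma bij_betw_map_S42_V:
  assumes inj: "inj_on f {1, 2, 3, 4}" and range: "f ` {1, 2, 3, 4} = {1, 2, 3, 4}"
  shows "bij_betw (map f) S42_V S42_V"
proof -
  have inj_map: "inj_on (map f) S42_V"
  proof (rule inj_onI)
    fix p q
    assume "p \<in> S42_V" "q \<in> S42_V" "map f p = map f q"
    then show "p = q"
      using inj S42_VD inj_on_map_eq_map[of f p q] by simp
  qed
  have "map f ` S42_V \<subseteq> S42_V"
  proof
    fix q
    assume "q \<in> map f ` S42_V"
    then obtain p where "p \<in> S42_V" "q = map f p"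
      by blast
    with S42_VD[of p] inj range show "q \<in> S42_V"
      by (auto simp: S42_V_def distinct_map)
  qed
  then show ?thesis
    using endo_inj_surj[of S42_V "map f"] inj_map by (simp add: bij_betw_def S42_V_eq)
qed

lemma S42_relabelling_iso:
  assumes "x \<in> S42_V"
  obtains h where "bij_betw h {..<24} S42_V" "h 0 = x"
    "\<And>i j. i < 24 \<Longrightarrow> j < 24 \<Longrightarrow> S42_E (h i) (h j) \<longleftrightarrow> j \<in> set (S42_nbr i)"
proof -
  obtain a b c d where x: "x = [a, b, c, d]"
    using assms by (auto simp: S42_V_def numeral_eq_Suc length_Suc_conv)
  define \<rho> where "\<rho> i = x ! (i - 1)" for i :: nat
  have \<rho>: "\<rho> (Suc 0) = a" "\<rho> 2 = b" "\<rho> 3 = c" "\<rho> 4 = d"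
    unfolding \<rho>_def x by simp_all
  have "distinct [a, b, c, d]" "{a, b, c, d} = {1, 2, 3, 4}"
    using assms x by (auto simp: S42_V_def)
  then have inj: "inj_on \<rho> {1, 2, 3, 4}" and range: "\<rho> ` {1, 2, 3, 4} = {1, 2, 3, 4}"
    by (simp_all add: inj_on_def \<rho>)
  have "bij_betw (map \<rho>) S42_V S42_V"
    using inj range by (rule bij_betw_map_S42_V)
  moreover have "bij_betw ((!) S42_perms) {..<24} S42_V"
    by (rule bij_betw_nth) (simp_all add: distinct_S42_perms length_S42_perms S42_V_eq)
  ultimately have "bij_betw (map \<rho> \<circ> (!) S42_perms) {..<24} S42_V"
    by (rule bij_betw_trans[rotated])
  moreover have "(map \<rho> \<circ> (!) S42_perms) 0 = x"
    by (simp add: S42_perms_def \<rho> x)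
  moreover have "S42_E ((map \<rho> \<circ> (!) S42_perms) i) ((map \<rho> \<circ> (!) S42_perms) j) \<longleftrightarrow> j \<in> set (S42_nbr i)"
    if "i < 24" "j < 24" for i j
  proof -
    have ij: "S42_perms ! i \<in> S42_V" "S42_perms ! j \<in> S42_V"
      using that length_S42_perms by (simp_all add: S42_V_eq)
    then have "inj_on \<rho> (set (S42_perms ! i) \<union> set (S42_perms ! j))"
      using S42_VD inj by simp
    then have "S42_E (map \<rho> (S42_perms ! i)) (map \<rho> (S42_perms ! j)) \<longleftrightarrow> S42_E (S42_perms ! i) (S42_perms ! j)"
      by (rule S42_E_relabel[OF S42_VD(1)[OF ij(1)]])
    also have "\<dots> \<longleftrightarrow> j \<in> set (S42_nbr i)"
      by (rule S42_E_nth_perms_iff[OF that])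
    finally show ?thesis
      by simp
  qed
  ultimately show ?thesis
    using that by blast
qed

lemma card_S42_components_less:
  assumes fails: "\<not> search 24 S42_nbr n (Grow ((replicate 24 Free)[0 := Grown]) (S42_nbr 0) k b (24 - k) 1 1)"
    and "0 < k" and F: "F \<subseteq> S42_V" "card F \<le> b"
  shows "card (components (S42_V - F) S42_E) < k"
proof (cases "components (S42_V - F) S42_E = {}")
  case False
  then obtain C where C: "C \<in> components (S42_V - F) S42_E"
    and smallest: "\<forall>D\<in>components (S42_V - F) S42_E. card C \<le> card D"
    using ex_has_least_nat[of "\<lambda>C. C \<in> components (S42_V - F) S42_E" _ card] by blast
  obtain x where "x \<in> C"
    using components_nonempty[OF C] by blast
  then have "x \<in> S42_V"
    using components_subset[OF C] by blast
  then obtain h where bij: "bij_betw h {..<24} S42_V" and "h 0 = x"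
    and adj: "\<And>i j. i < 24 \<Longrightarrow> j < 24 \<Longrightarrow> S42_E (h i) (h j) \<longleftrightarrow> j \<in> set (S42_nbr i)"
    using S42_relabelling_iso by metis
  show ?thesis
    using S42.card_components_less_if_search_fails_iso[OF fails bij adj F C _ _ smallest] \<open>h 0 = x\<close> \<open>x \<in> C\<close>
    by simp
qed (use \<open>0 < k\<close> in simp)

text \<open>
  The searches are evaluated in unary: every numeral becomes a Suc-term, so that the arithmetic on
  the counters and the list operations on states reduce by rewriting alone.
\<close>

lemmas S42_nbr_unary = S42_nbr_def[unfolded numeral_eq_Suc pred_numeral_simps BitM.simps One_nat_def]

lemmas search_eval = numeral_eq_Suc pred_numeral_simps BitM.simps One_nat_def
  search.simps(2) task.case list.case S42_nbr_unary
  replicate.simps list_update_code nth_Cons_0 nth_Cons_Suc list.map level_reset.simps status.distinct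
  if_True if_False simp_thms append.simps nat.distinct nat.inject le0 le_zero_eq Suc_le_mono
  less_nat_zero_code zero_less_Suc Suc_less_eq diff_Suc_Suc minus_nat.diff_0 diff_0_eq_0
  add_Suc add_0 mult_Suc mult_0

lemma S42_search_4:
  "\<not> search 24 S42_nbr 100 (Grow ((replicate 24 Free)[0 := Grown]) (S42_nbr 0) 4 9 (24 - 4) 1 1)"
  by (simp only: search_eval cong: if_weak_cong)

lemma S42_search_5:
  "\<not> search 24 S42_nbr 100 (Grow ((replicate 24 Free)[0 := Grown]) (S42_nbr 0) 5 11 (24 - 5) 1 1)"
  by (simp only: search_eval cong: if_weak_cong)

theorem lemma19:
  shows "gen_conn 4 S42_V S42_E \<ge> 10 \<and> gen_conn 5 S42_V S42_E \<ge> 12"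
proof -
  have fin: "finite S42_V" and card: "card S42_V = 24"
    by (simp_all add: S42_V_eq distinct_card[OF distinct_S42_perms] length_S42_perms)
  have "10 \<le> gen_conn 4 S42_V S42_E"
    using card_S42_components_less[OF S42_search_4] by (intro gen_conn_lower_bound[OF fin]) (simp_all add: card)
  moreover have "12 \<le> gen_conn 5 S42_V S42_E"
    using card_S42_components_less[OF S42_search_5] by (intro gen_conn_lower_bound[OF fin]) (simp_all add: card)
  ultimately show ?thesis
    by simp
qed

end
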